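(* For $k\in\mathbb N$, $k\ge1$, define $H_k(g,J)=\frac1k\Re\operatorname{tr}(J^k)$ and $\tilde H_k(g,J)=\frac1k\Im\operatorname{tr}(J^k)$ on $\mathfrak M$. All these functions pairwise Poisson commute with respect to both $\{\ ,\ \}_1$ and $\{\ ,\ \}_2$, and for every $k$ one has $$\{\,\cdot\,,H_k\}_2=\{\,\cdot\,,H_{k+1}\}_1,\qquad \{\,\cdot\,,\tilde H_k\}_2=\{\,\cdot\,,\tilde H_{k+1}\}_1 .$$ The Hamiltonian flow of $H_k$ with respect to $\{\ ,\ \}_2$ (equivalently of $H_{k+1}$ with respect to $\{\ ,\ \}_1$) through $(g(0),J(0))$ is $(g(t),J(t))=(\exp(J(0)^kt)\,g(0),J(0))$, and that of $\tilde H_k$ with respect to $\{\ ,\ \}_2$ (equivalently of $\tilde H_{k+1}$ with respect to $\{\ ,\ \}_1$) is $(g(t),J(t))=(\exp(-\mathrm i J(0)^kt)\,g(0),J(0))$.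
   Context: $G=\mathrm{GL}(n,\mathbb C)$ is regarded as a real Lie group with Lie algebra $\mathcal G=\mathfrak{gl}(n,\mathbb C)$ regarded as a real Lie algebra, equipped with the bilinear form $\langle X,Y\rangle=\Re\operatorname{tr}(XY)$. Every $X\in\mathcal G$ decomposes uniquely as $X=X_>+X_0+X_<$ (strictly upper triangular, diagonal, strictly lower triangular parts). Set $r(X)=\frac12(X_>-X_<)$, $r_\pm=r\pm\frac12\mathrm{id}$. Let $\mathfrak M=G\times\mathcal G=\{(g,J)\}$. For $F\in C^\infty(\mathfrak M,\mathbb R)$ define $\mathcal G$-valued derivatives by $\langle\nabla_1F(g,J),X\rangle=\frac{d}{dt}\big|_{t=0}F(e^{tX}g,J)$, $\langle\nabla_1'F(g,J),X\rangle=\frac{d}{dt}\big|_{t=0}F(ge^{tX},J)$, $\langle d_2F(g,J),X\rangle=\frac{d}{dt}\big|_{t=0}F(g,J+tX)$ for all $X\in\mathcal G$, and $\nabla_2F=J\,d_2F$, $\nabla_2'F=(d_2F)\,J$. The Poisson brackets are $\{F,H\}_1=\langle \nabla_1F,d_2H\rangle-\langle\nabla_1H,d_2F\rangle+\langle J,[d_2F,d_2H]\rangle$ and $\{F,H\}_2=\langle r\nabla_1F,\nabla_1H\rangle-\langle r\nabla_1'F,\nabla_1'H\rangle+\langle \nabla_2F-\nabla_2'F, r_+\nabla_2'H-r_-\nabla_2H\rangle+\langle\nabla_1F, r_+\nabla_2'H-r_-\nabla_2H\rangle-\langle\nabla_1H, r_+\nabla_2'F-r_-\nabla_2F\rangle$.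 The Hamiltonian flow of $H$ w.r.t. a bracket $\{\ ,\ \}$ is the flow of the vector field $F\mapsto\{F,H\}$. *)

theory Defs
  imports "HOL-Analysis.Analysis"
begin

type_synonym 'n cmat = "complex^'n^'n"

definition idm :: "'n::finite cmat" where "idm = mat 1"

fun mpow :: "'n::finite cmat \<Rightarrow> nat \<Rightarrow> 'n cmat" where
  "mpow A 0 = idm"
| "mpow A (Suc m) = A ** mpow A m"

definition mexp :: "'n::finite cmat \<Rightarrow> 'n cmat" where
  "mexp A = (\<Sum>m. (1 / fact m) *\<^sub>R mpow A m)"

definition csc :: "complex \<Rightarrow> 'n::finite cmat \<Rightarrow> 'n cmat" where
  "csc c A = (\<chi> i j. c * A $ i $ j)"

definition pair :: "'n::finite cmat \<Rightarrow> 'n cmat \<Rightarrow> real" where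
  "pair X Y = Re (trace (X ** Y))"

definition upper :: "'n::{finite,linorder} cmat \<Rightarrow> 'n cmat" where
  "upper X = (\<chi> i j. if i < j then X $ i $ j else 0)"

definition lower :: "'n::{finite,linorder} cmat \<Rightarrow> 'n cmat" where
  "lower X = (\<chi> i j. if j < i then X $ i $ j else 0)"

definition rmap :: "'n::{finite,linorder} cmat \<Rightarrow> 'n cmat" where
  "rmap X = (1/2::real) *\<^sub>R (upper X - lower X)"

definition rplus :: "'n::{finite,linorder} cmat \<Rightarrow> 'n cmat" where
  "rplus X = rmap X + (1/2::real) *\<^sub>R X"

definition rminus :: "'n::{finite,linorder} cmat \<Rightarrow> 'n cmat" where
  "rminus X = rmap X - (1/2::real) *\<^sub>R X"

definition comm :: "'n::finite cmat \<Rightarrow> 'n cmat \<Rightarrow> 'n cmat" where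
  "comm X Y = X ** Y - Y ** X"

definition Mspace :: "('n::finite cmat \<times> 'n cmat) set" where
  "Mspace = {(g, J). invertible g}"

text \<open>Smooth (C-infinity) real functions on an open set: differentiable, and all
  directional derivatives again smooth.\<close>
coinductive smooth_on :: "'a::real_normed_vector set \<Rightarrow> ('a \<Rightarrow> real) \<Rightarrow> bool" where
  "\<lbrakk>open U; \<forall>x\<in>U. F differentiable (at x);
    \<forall>v. smooth_on U (\<lambda>x. frechet_derivative F (at x) v)\<rbrakk> \<Longrightarrow> smooth_on U F"

definition mgrad :: "('n::finite cmat \<Rightarrow> real \<Rightarrow> real) \<Rightarrow> 'n cmat" where
  "mgrad \<phi> = (THE Y. \<forall>X. (\<phi> X has_real_derivative pair Y X) (at 0))"

definition nabla1 :: "('n::finite cmat \<times> 'n cmat \<Rightarrow> real) \<Rightarrow> 'n cmat \<Rightarrow> 'n cmat \<Rightarrow> 'n cmat" where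
  "nabla1 F g J = mgrad (\<lambda>X t. F (mexp (t *\<^sub>R X) ** g, J))"

definition nabla1' :: "('n::finite cmat \<times> 'n cmat \<Rightarrow> real) \<Rightarrow> 'n cmat \<Rightarrow> 'n cmat \<Rightarrow> 'n cmat" where
  "nabla1' F g J = mgrad (\<lambda>X t. F (g ** mexp (t *\<^sub>R X), J))"

definition d2 :: "('n::finite cmat \<times> 'n cmat \<Rightarrow> real) \<Rightarrow> 'n cmat \<Rightarrow> 'n cmat \<Rightarrow> 'n cmat" where
  "d2 F g J = mgrad (\<lambda>X t. F (g, J + t *\<^sub>R X))"

definition nabla2 :: "('n::finite cmat \<times> 'n cmat \<Rightarrow> real) \<Rightarrow> 'n cmat \<Rightarrow> 'n cmat \<Rightarrow> 'n cmat" where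
  "nabla2 F g J = J ** d2 F g J"

definition nabla2' :: "('n::finite cmat \<times> 'n cmat \<Rightarrow> real) \<Rightarrow> 'n cmat \<Rightarrow> 'n cmat \<Rightarrow> 'n cmat" where
  "nabla2' F g J = d2 F g J ** J"

definition PB1 :: "('n::finite cmat \<times> 'n cmat \<Rightarrow> real) \<Rightarrow> ('n cmat \<times> 'n cmat \<Rightarrow> real)
    \<Rightarrow> 'n cmat \<times> 'n cmat \<Rightarrow> real" where
  "PB1 F H p = (case p of (g, J) \<Rightarrow>
      pair (nabla1 F g J) (d2 H g J) - pair (nabla1 H g J) (d2 F g J)
      + pair J (comm (d2 F g J) (d2 H g J)))"

definition PB2 :: "('n::{finite,linorder} cmat \<times> 'n cmat \<Rightarrow> real) \<Rightarrow> ('n cmat \<times> 'n cmat \<Rightarrow> real)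
    \<Rightarrow> 'n cmat \<times> 'n cmat \<Rightarrow> real" where
  "PB2 F H p = (case p of (g, J) \<Rightarrow>
      pair (rmap (nabla1 F g J)) (nabla1 H g J)
      - pair (rmap (nabla1' F g J)) (nabla1' H g J)
      + pair (nabla2 F g J - nabla2' F g J)
             (rplus (nabla2' H g J) - rminus (nabla2 H g J))
      + pair (nabla1 F g J) (rplus (nabla2' H g J) - rminus (nabla2 H g J))
      - pair (nabla1 H g J) (rplus (nabla2' F g J) - rminus (nabla2 F g J)))"

text \<open>gamma is an integral curve of the Hamiltonian vector field F \<mapsto> PB F H
  (for a bracket PB) through p0, defined for all real times.\<close>
definition ham_flow_curve ::
  "(('n::finite cmat \<times> 'n cmat \<Rightarrow> real) \<Rightarrow> ('n cmat \<times> 'n cmat \<Rightarrow> real) \<Rightarrow> 'n cmat \<times> 'n cmat \<Rightarrow> real)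
   \<Rightarrow> ('n cmat \<times> 'n cmat \<Rightarrow> real) \<Rightarrow> 'n cmat \<times> 'n cmat \<Rightarrow> (real \<Rightarrow> 'n cmat \<times> 'n cmat) \<Rightarrow> bool" where
  "ham_flow_curve PB H p0 \<gamma> \<longleftrightarrow> \<gamma> 0 = p0 \<and> (\<forall>t. \<gamma> t \<in> Mspace) \<and>
     (\<forall>F t. smooth_on Mspace F \<longrightarrow>
        ((\<lambda>s. F (\<gamma> s)) has_real_derivative PB F H (\<gamma> t)) (at t))"

definition Hk :: "nat \<Rightarrow> 'n::finite cmat \<times> 'n cmat \<Rightarrow> real" where
  "Hk k p = (1 / real k) * Re (trace (mpow (snd p) k))"

definition Htk :: "nat \<Rightarrow> 'n::finite cmat \<times> 'n cmat \<Rightarrow> real" where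
  "Htk k p = (1 / real k) * Im (trace (mpow (snd p) k))"

end

theory Submission
  imports Defs
begin

text \<open>The functions H_k and H~_k depend on J only, through tr(J^k); hence their g-gradients vanish
  and their J-gradient is c J^(k-1) with c = 1, resp. c = -i. All terms of both brackets between
  two such functions involve commutators of powers of J and vanish. For an arbitrary F, the terms of
  {F,H}_2 and {F,H}_1 containing d2 F vanish by ad-invariance of the trace form, because c J^k commutes
  with J; what remains in both cases is the pairing of nabla1 F with c J^k. A bracket of that form is
  the derivative of F along the left translations by exp(t c J^k), which gives the flows.\<close>

lemma matrix_add_rdistrib:
  "((A::complex^'m::finite^'n::finite) + B) ** (C::complex^'p::finite^'m) = A ** C + B ** C"
  by (simp add: vec_eq_iff matrix_matrix_mult_def distrib_right sum.distrib)

lemma matrix_diff_rdistrib: "((A::'n::finite cmat) - B) ** C = A ** C - B ** C"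
  by (simp add: vec_eq_iff matrix_matrix_mult_def left_diff_distrib sum_subtractf)

lemma matrix_diff_ldistrib: "(C::'n::finite cmat) ** (A - B) = C ** A - C ** B"
  by (simp add: vec_eq_iff matrix_matrix_mult_def right_diff_distrib sum_subtractf)

lemma idm_mult [simp]: "idm ** (A::'n::finite cmat) = A"
  by (simp add: idm_def)

lemma mult_idm [simp]: "(A::'n::finite cmat) ** idm = A"
  by (simp add: idm_def)

lemma trace_zero [simp]: "trace (0::'n::finite cmat) = 0"
  by (simp add: trace_def)

lemma trace_scaleR: "trace (r *\<^sub>R (A::'n::finite cmat)) = r *\<^sub>R trace A"
  by (simp add: trace_def scaleR_sum_right)

lemma bounded_linear_trace: "bounded_linear (trace :: 'n::finite cmat \<Rightarrow> complex)"
  by (simp add: linear_conv_bounded_linear[symmetric] linearI trace_add trace_scaleR)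

lemma mpow_Suc_right: "mpow A (Suc m) = mpow A m ** A"
  by (induction m) (simp_all add: matrix_mul_assoc)

lemma mpow_commute: "A ** mpow A m = mpow A m ** A"
  by (metis mpow.simps(2) mpow_Suc_right)

lemma mpow_mult_commute: "mpow A a ** mpow A b = mpow A b ** mpow A a"
proof (induction a)
  case 0
  show ?case by simp
next
  case (Suc a)
  have "mpow A (Suc a) ** mpow A b = A ** (mpow A a ** mpow A b)"
    by (simp add: matrix_mul_assoc)
  also have "\<dots> = (A ** mpow A b) ** mpow A a"
    by (simp add: Suc matrix_mul_assoc)
  also have "\<dots> = mpow A b ** mpow A (Suc a)"
    by (simp add: mpow_commute[of A b] matrix_mul_assoc)
  finally show ?case .
qed

lemma csc_1 [simp]: "csc 1 A = A"
  by (simp add: csc_def vec_eq_iff)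

lemma csc_mult_left: "csc c A ** B = csc c (A ** B)"
  by (simp add: csc_def vec_eq_iff matrix_matrix_mult_def sum_distrib_left mult_ac)

lemma csc_mult_right: "A ** csc c B = csc c (A ** B)"
  by (simp add: csc_def vec_eq_iff matrix_matrix_mult_def sum_distrib_left mult_ac)

lemma csc_csc: "csc c (csc d A) = csc (c * d) A"
  by (simp add: csc_def vec_eq_iff mult_ac)

lemma trace_csc: "trace (csc c A) = c * trace A"
  by (simp add: csc_def trace_def sum_distrib_left)

lemma csc_of_real: "csc (c * complex_of_real t) A = t *\<^sub>R csc c A"
  by (simp add: csc_def vec_eq_iff) (simp add: scaleR_conv_of_real)

lemma rmap_0 [simp]: "rmap 0 = 0"
  by (simp add: rmap_def upper_def lower_def vec_eq_iff)

lemma rplus_minus_rminus [simp]: "rplus Z - rminus Z = Z"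
  by (simp add: rplus_def rminus_def algebra_simps scaleR_2[symmetric] del: scaleR_2)

section \<open>Matrices as a Banach algebra\<close>

text \<open>A copy of the bounded operators on C^n, which (unlike the type of bounded linear functions)
  can be made a real_normed_algebra_1, so that the library's exp applies to it.\<close>

typedef ('n::finite) endo = "UNIV :: ((complex^'n) \<Rightarrow>\<^sub>L (complex^'n)) set" by simp
setup_lifting type_definition_endo

instantiation endo :: (finite) real_normed_vector
begin
lift_definition zero_endo :: "'a endo" is 0 .
lift_definition plus_endo :: "'a endo \<Rightarrow> 'a endo \<Rightarrow> 'a endo" is "(+)" .
lift_definition minus_endo :: "'a endo \<Rightarrow> 'a endo \<Rightarrow> 'a endo" is "(-)" .
lift_definition uminus_endo :: "'a endo \<Rightarrow> 'a endo" is uminus .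
lift_definition scaleR_endo :: "real \<Rightarrow> 'a endo \<Rightarrow> 'a endo" is scaleR .
lift_definition norm_endo :: "'a endo \<Rightarrow> real" is norm .
definition dist_endo :: "'a endo \<Rightarrow> 'a endo \<Rightarrow> real" where "dist_endo a b = norm (a - b)"
definition uniformity_endo :: "('a endo \<times> 'a endo) filter" where
  "uniformity_endo = (INF e\<in>{0 <..}. principal {(x, y). dist x y < e})"
definition open_endo :: "'a endo set \<Rightarrow> bool" where
  "open_endo S = (\<forall>x\<in>S. \<forall>\<^sub>F (x', y) in uniformity. x' = x \<longrightarrow> y \<in> S)"
definition sgn_endo :: "'a endo \<Rightarrow> 'a endo" where "sgn_endo x = scaleR (inverse (norm x)) x"
instance
  apply standard
  unfolding dist_endo_def open_endo_def sgn_endo_def uniformity_endo_def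
  apply (rule refl | (transfer, force simp: algebra_simps norm_triangle_ineq))+
  done
end

instantiation endo :: (finite) real_normed_algebra_1
begin
lift_definition times_endo :: "'a endo \<Rightarrow> 'a endo \<Rightarrow> 'a endo" is "(o\<^sub>L)" .
lift_definition one_endo :: "'a endo" is id_blinfun .
instance
  apply standard
  apply (transfer; auto intro!: blinfun_eqI simp: blinfun.bilinear_simps norm_blinfun_compose)+
    apply (metis norm_blinfun_id norm_zero zero_neq_one)
   apply transfer apply (rule norm_blinfun_compose)
  apply transfer apply simp
  done
end

lemma dist_Rep_endo: "dist (Rep_endo a) (Rep_endo b) = dist a b"
  by (simp add: dist_endo_def dist_norm norm_endo.rep_eq minus_endo.rep_eq)

instance endo :: (finite) banach
proof
  fix X :: "nat \<Rightarrow> 'a endo"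
  assume "Cauchy X"
  then have "Cauchy (\<lambda>n. Rep_endo (X n))" by (simp add: Cauchy_def dist_Rep_endo)
  then obtain L where "(\<lambda>n. Rep_endo (X n)) \<longlonglongrightarrow> L"
    using convergent_def Cauchy_convergent_iff by blast
  then have "X \<longlonglongrightarrow> Abs_endo L"
    by (simp add: lim_sequentially dist_Rep_endo[symmetric] Abs_endo_inverse)
  then show "convergent X" by (auto simp: convergent_def)
qed

lift_definition endo_of_matrix :: "'n::finite cmat \<Rightarrow> 'n endo" is "\<lambda>A. Blinfun ((*v) A)" .

definition matrix_of_endo :: "'n::finite endo \<Rightarrow> 'n cmat" where
  "matrix_of_endo E = matrix (blinfun_apply (Rep_endo E))"

lemma endo_of_matrix_apply: "blinfun_apply (Rep_endo (endo_of_matrix A)) v = A *v v"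
  by (simp add: endo_of_matrix.rep_eq bounded_linear_Blinfun_apply)

lemma endo_eqI: "(\<And>v. blinfun_apply (Rep_endo E) v = blinfun_apply (Rep_endo E') v) \<Longrightarrow> E = E'"
  by (metis Rep_endo_inject blinfun_eqI)

lemma matrix_of_endo_of_matrix [simp]: "matrix_of_endo (endo_of_matrix A) = A"
  by (simp add: matrix_of_endo_def endo_of_matrix_apply[abs_def])

lemma endo_of_matrix_inject: "endo_of_matrix A = endo_of_matrix B \<Longrightarrow> A = B"
  by (metis matrix_of_endo_of_matrix)

lemma endo_of_matrix_mult: "endo_of_matrix (A ** B) = endo_of_matrix A * endo_of_matrix B"
  by (rule endo_eqI) (simp add: times_endo.rep_eq endo_of_matrix_apply matrix_vector_mul_assoc)

lemma endo_of_matrix_idm: "endo_of_matrix idm = 1"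
  by (rule endo_eqI) (simp add: one_endo.rep_eq endo_of_matrix_apply idm_def)

lemma endo_of_matrix_mpow: "endo_of_matrix (mpow A m) = endo_of_matrix A ^ m"
  by (induction m) (simp_all add: endo_of_matrix_idm endo_of_matrix_mult)

lemma bounded_linear_endo_of_matrix: "bounded_linear (endo_of_matrix :: 'n::finite cmat \<Rightarrow> 'n endo)"
proof -
  have "linear (endo_of_matrix :: 'n cmat \<Rightarrow> 'n endo)"
    by (rule linearI; rule endo_eqI)
      (simp_all add: endo_of_matrix_apply plus_endo.rep_eq scaleR_endo.rep_eq plus_blinfun.rep_eq
        scaleR_blinfun.rep_eq vec_eq_iff matrix_vector_mult_def scaleR_sum_right algebra_simps sum.distrib)
  then show ?thesis by (simp add: linear_conv_bounded_linear)
qed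

lemma norm_le_sum_norm_nth: "norm (x::'b::real_normed_vector^'n::finite) \<le> (\<Sum>i\<in>UNIV. norm (x $ i))"
  by (simp add: norm_vec_def L2_set_le_sum)

lemma norm_matrix_of_endo_le: "norm (matrix_of_endo E) \<le> norm E * (real CARD('n) * real CARD('n))"
  for E :: "'n::finite endo"
proof -
  have entry: "norm (matrix_of_endo E $ i $ j) \<le> norm E" for i j
  proof -
    have "norm (matrix_of_endo E $ i $ j) \<le> norm (blinfun_apply (Rep_endo E) (axis j 1))"
      by (simp add: matrix_of_endo_def matrix_def Finite_Cartesian_Product.norm_nth_le)
    also have "\<dots> \<le> norm (Rep_endo E) * norm (axis j (1::complex))" by (rule norm_blinfun)
    finally show ?thesis by (simp add: norm_endo.rep_eq)
  qed
  have "norm (matrix_of_endo E) \<le> (\<Sum>i\<in>UNIV. \<Sum>j\<in>UNIV. norm (matrix_of_endo E $ i $ j))"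
    by (rule order_trans[OF norm_le_sum_norm_nth sum_mono[OF norm_le_sum_norm_nth]])
  also have "\<dots> \<le> (\<Sum>i\<in>(UNIV::'n set). \<Sum>j\<in>(UNIV::'n set). norm E)"
    by (intro sum_mono entry)
  finally show ?thesis by (simp add: mult_ac)
qed

lemma bounded_linear_matrix_of_endo: "bounded_linear (matrix_of_endo :: 'n::finite endo \<Rightarrow> 'n cmat)"
proof
  show "matrix_of_endo (x + y) = matrix_of_endo x + matrix_of_endo y" for x y :: "'n endo"
    by (simp add: matrix_of_endo_def matrix_def plus_endo.rep_eq plus_blinfun.rep_eq vec_eq_iff)
  show "matrix_of_endo (r *\<^sub>R x) = r *\<^sub>R matrix_of_endo x" for r and x :: "'n endo"
    by (simp add: matrix_of_endo_def matrix_def scaleR_endo.rep_eq scaleR_blinfun.rep_eq vec_eq_iff)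
  show "\<exists>K. \<forall>x::'n endo. norm (matrix_of_endo x) \<le> norm x * K"
    using norm_matrix_of_endo_le by blast
qed

section \<open>The matrix exponential\<close>

lemma mexp_sums: "(\<lambda>m. (1 / fact m) *\<^sub>R mpow A m) sums matrix_of_endo (exp (endo_of_matrix A))"
proof -
  have "(\<lambda>m. endo_of_matrix A ^ m /\<^sub>R fact m) sums exp (endo_of_matrix A)"
    unfolding exp_def by (rule summable_exp_generic[THEN summable_sums])
  from bounded_linear.sums[OF bounded_linear_matrix_of_endo this] show ?thesis
    by (simp add: linear_scale[OF bounded_linear.linear[OF bounded_linear_matrix_of_endo]]
        endo_of_matrix_mpow[symmetric] divide_inverse_commute)
qed

lemma mexp_eq_exp: "mexp A = matrix_of_endo (exp (endo_of_matrix A))"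
  unfolding mexp_def using mexp_sums sums_unique by metis

lemma endo_of_matrix_scaleR: "endo_of_matrix (r *\<^sub>R A) = r *\<^sub>R endo_of_matrix A"
  by (rule linear_scale[OF bounded_linear.linear[OF bounded_linear_endo_of_matrix]])

lemma endo_of_matrix_uminus: "endo_of_matrix (- A) = - endo_of_matrix A"
  by (rule linear_neg[OF bounded_linear.linear[OF bounded_linear_endo_of_matrix]])

lemma endo_of_matrix_mexp: "endo_of_matrix (mexp A) = exp (endo_of_matrix A)"
proof -
  have "(\<lambda>m. endo_of_matrix ((1 / fact m) *\<^sub>R mpow A m)) sums endo_of_matrix (mexp A)"
    using bounded_linear.sums[OF bounded_linear_endo_of_matrix mexp_sums] mexp_eq_exp by metis
  moreover have "(\<lambda>m. endo_of_matrix ((1 / fact m) *\<^sub>R mpow A m)) sums exp (endo_of_matrix A)"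
    using summable_exp_generic[THEN summable_sums, of "endo_of_matrix A"]
    by (simp add: endo_of_matrix_scaleR endo_of_matrix_mpow exp_def divide_inverse_commute)
  ultimately show ?thesis using sums_unique2 by blast
qed

lemma mexp_zero: "mexp 0 = idm"
  by (rule endo_of_matrix_inject)
    (simp add: endo_of_matrix_mexp endo_of_matrix_idm linear_0[OF bounded_linear.linear[OF bounded_linear_endo_of_matrix]])

lemma has_vector_derivative_mexp:
  "((\<lambda>s. mexp (s *\<^sub>R C)) has_vector_derivative C ** mexp (t *\<^sub>R C)) (at t)"
proof -
  let ?E = "endo_of_matrix C"
  have "((\<lambda>s. matrix_of_endo (exp (s *\<^sub>R ?E))) has_vector_derivative
          matrix_of_endo (?E * exp (t *\<^sub>R ?E))) (at t)"
    by (rule bounded_linear.has_vector_derivative[OF bounded_linear_matrix_of_endo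
          exp_scaleR_has_vector_derivative_left])
  moreover have "matrix_of_endo (?E * exp (t *\<^sub>R ?E)) = C ** mexp (t *\<^sub>R C)"
    using matrix_of_endo_of_matrix[of "C ** mexp (t *\<^sub>R C)"]
    by (simp add: endo_of_matrix_mult endo_of_matrix_mexp endo_of_matrix_scaleR)
  ultimately show ?thesis
    by (simp add: mexp_eq_exp endo_of_matrix_scaleR)
qed

lemma invertible_mexp: "invertible (mexp (t *\<^sub>R C))"
proof -
  let ?E = "endo_of_matrix C"
  have "exp (t *\<^sub>R ?E) * exp ((-t) *\<^sub>R ?E) = exp (t *\<^sub>R ?E + (-t) *\<^sub>R ?E)"
    by (rule exp_add_commuting[symmetric]) (simp add: algebra_simps)
  then have "endo_of_matrix (mexp (t *\<^sub>R C) ** mexp ((-t) *\<^sub>R C)) = endo_of_matrix (mat 1)"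
    by (simp add: endo_of_matrix_mult endo_of_matrix_mexp endo_of_matrix_scaleR
        endo_of_matrix_uminus endo_of_matrix_idm[unfolded idm_def])
  then show ?thesis
    using invertible_right_inverse endo_of_matrix_inject by blast
qed

definition ctranspose :: "'n::finite cmat \<Rightarrow> 'n cmat" where
  "ctranspose Y = (\<chi> a b. cnj (Y $ b $ a))"

lemma ctranspose_ctranspose [simp]: "ctranspose (ctranspose Y) = Y"
  by (simp add: ctranspose_def vec_eq_iff)

lemma pair_eq_inner: "pair Y X = inner (ctranspose Y) X"
  unfolding pair_def trace_def matrix_matrix_mult_def inner_vec_def ctranspose_def inner_complex_def
  by (subst sum.swap) (simp add: Re_sum)

lemma pair_0_left [simp]: "pair 0 X = 0"
  by (simp add: pair_def)

lemma pair_0_right [simp]: "pair X 0 = 0"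
  by (simp add: pair_def)

lemma pair_eqI:
  assumes "\<And>X. pair A X = pair B X"
  shows "A = B"
proof -
  have "inner (ctranspose A - ctranspose B) (ctranspose A - ctranspose B) = 0"
    using assms[of "ctranspose A - ctranspose B"] by (simp add: pair_eq_inner inner_diff_left)
  then show ?thesis by (metis ctranspose_ctranspose eq_iff_diff_eq_0 inner_eq_zero_iff)
qed

lemma linear_eq_pair:
  assumes "linear (l :: 'n::finite cmat \<Rightarrow> real)"
  shows "\<exists>Y. \<forall>X. l X = pair Y X"
proof (intro exI allI)
  fix X
  have "l X = inner X (adjoint l 1)"
    using adjoint_works[OF assms, of X 1] by simp
  also have "\<dots> = pair (ctranspose (adjoint l 1)) X"
    by (simp add: pair_eq_inner inner_commute)
  finally show "l X = pair (ctranspose (adjoint l 1)) X" .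
qed

lemma mgrad_eqI:
  assumes "\<And>X. (\<phi> X has_real_derivative pair Y X) (at 0)"
  shows "mgrad \<phi> = Y"
  unfolding mgrad_def
proof (rule the_equality)
  show "\<forall>X. (\<phi> X has_real_derivative pair Y X) (at 0)"
    using assms by blast
next
  fix Y'
  assume "\<forall>X. (\<phi> X has_real_derivative pair Y' X) (at 0)"
  then show "Y' = Y"
    using assms DERIV_unique by (intro pair_eqI) blast
qed

lemma pair_mgrad:
  assumes "linear l" and "\<And>X. (\<phi> X has_real_derivative l X) (at 0)"
  shows "pair (mgrad \<phi>) X = l X"
proof -
  obtain Y where Y: "\<And>X. l X = pair Y X"
    using linear_eq_pair[OF assms(1)] by blast
  then have "mgrad \<phi> = Y"
    using assms(2) by (intro mgrad_eqI) metis
  then show ?thesis by (simp add: Y)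
qed

lemma mgrad_const: "mgrad (\<lambda>X t. a) = 0"
  by (rule mgrad_eqI) simp

section \<open>Differentiating traces of powers\<close>

lemma bounded_bilinear_matrix_mult: "bounded_bilinear ((**) :: 'n::finite cmat \<Rightarrow> 'n cmat \<Rightarrow> 'n cmat)"
  by (simp add: bilinear_conv_bounded_bilinear[symmetric] bilinear_def linearI matrix_add_rdistrib
      matrix_add_ldistrib scalar_matrix_assoc[symmetric] matrix_scalar_ac)

text \<open>The statement for all B commuting with J (rather than just B = 1) is what makes the
  induction go through: cyclicity of the trace moves the new factor J onto B.\<close>

lemma mpow_line_derivative:
  "\<exists>D. ((\<lambda>t. mpow (J + t *\<^sub>R X) (Suc m)) has_vector_derivative D) (at 0) \<and>
       (\<forall>B. B ** J = J ** B \<longrightarrow> trace (D ** B) = of_nat (Suc m) * trace (X ** mpow J m ** B))"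
proof (induction m)
  case 0
  have "((\<lambda>t. mpow (J + t *\<^sub>R X) 1) has_vector_derivative X) (at 0)"
    by (auto intro!: derivative_eq_intros)
  then show ?case by auto
next
  case (Suc m)
  then obtain D where D: "((\<lambda>t. mpow (J + t *\<^sub>R X) (Suc m)) has_vector_derivative D) (at 0)"
    and trace_D: "\<And>B. B ** J = J ** B \<Longrightarrow> trace (D ** B) = of_nat (Suc m) * trace (X ** mpow J m ** B)"
    by blast
  have line: "((\<lambda>t. J + t *\<^sub>R X) has_vector_derivative X) (at 0)"
    by (auto intro!: derivative_eq_intros)
  have "((\<lambda>t. mpow (J + t *\<^sub>R X) (Suc (Suc m))) has_vector_derivative J ** D + X ** mpow J (Suc m)) (at 0)"
    using bounded_bilinear.has_vector_derivative[OF bounded_bilinear_matrix_mult line D] by simp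
  moreover have "trace ((J ** D + X ** mpow J (Suc m)) ** B) = of_nat (Suc (Suc m)) * trace (X ** mpow J (Suc m) ** B)"
    if B: "B ** J = J ** B" for B
  proof -
    have "X ** mpow J m ** (B ** J) = X ** mpow J (Suc m) ** B"
      by (simp only: B mpow_Suc_right matrix_mul_assoc)
    have "trace ((J ** D) ** B) = trace (D ** (B ** J))"
      by (simp only: matrix_mul_assoc[symmetric] trace_mul_sym[of J])
    also have "\<dots> = of_nat (Suc m) * trace (X ** mpow J m ** (B ** J))"
      by (intro trace_D) (simp only: B matrix_mul_assoc[symmetric])
    also have "\<dots> = of_nat (Suc m) * trace (X ** mpow J (Suc m) ** B)"
      by (simp only: \<open>X ** mpow J m ** (B ** J) = X ** mpow J (Suc m) ** B\<close>)
    finally show ?thesis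
      by (simp add: matrix_add_rdistrib trace_add ring_distribs)
  qed
  ultimately show ?case by blast
qed

lemma has_vector_derivative_trace_mpow:
  "((\<lambda>t. trace (mpow (J + t *\<^sub>R X) (Suc m))) has_vector_derivative
      of_nat (Suc m) * trace (mpow J m ** X)) (at 0)"
proof -
  obtain D where D: "((\<lambda>t. mpow (J + t *\<^sub>R X) (Suc m)) has_vector_derivative D) (at 0)"
    and trace_D: "\<forall>B. B ** J = J ** B \<longrightarrow> trace (D ** B) = of_nat (Suc m) * trace (X ** mpow J m ** B)"
    using mpow_line_derivative by blast
  have "trace D = of_nat (Suc m) * trace (X ** mpow J m)"
    using trace_D[rule_format, of idm] by simp
  also have "\<dots> = of_nat (Suc m) * trace (mpow J m ** X)"
    by (simp only: trace_mul_sym[of X])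
  finally show ?thesis
    using bounded_linear.has_vector_derivative[OF bounded_linear_trace D] by simp
qed

section \<open>Trace functions and their brackets\<close>

definition trace_power :: "complex \<Rightarrow> nat \<Rightarrow> 'n::finite cmat \<times> 'n cmat \<Rightarrow> real" where
  "trace_power c k p = Re (c * trace (mpow (snd p) k)) / real k"

lemma Hk_eq_trace_power: "Hk k = trace_power 1 k"
  by (simp add: Hk_def trace_power_def fun_eq_iff)

lemma Htk_eq_trace_power: "Htk k = trace_power (- \<i>) k"
  by (simp add: Htk_def trace_power_def fun_eq_iff)

definition has_power_gradient :: "('n::finite cmat \<times> 'n cmat \<Rightarrow> real) \<Rightarrow> complex \<Rightarrow> nat \<Rightarrow> bool" where
  "has_power_gradient H c m \<longleftrightarrow>
     (\<forall>g J. nabla1 H g J = 0 \<and> nabla1' H g J = 0 \<and> d2 H g J = csc c (mpow J m))"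

lemma d2_trace_power: "d2 (trace_power c (Suc m)) g J = csc c (mpow J m)"
  unfolding d2_def
proof (rule mgrad_eqI)
  fix X
  have "bounded_linear (\<lambda>z. Re (c * z) / real (Suc m))"
    by (rule bounded_linear_compose[OF bounded_linear_divide
          bounded_linear_compose[OF bounded_linear_Re bounded_linear_mult_right]])
  from bounded_linear.has_vector_derivative[OF this has_vector_derivative_trace_mpow[of J X m]]
  have "((\<lambda>t. trace_power c (Suc m) (g, J + t *\<^sub>R X)) has_real_derivative
          Re (c * (of_nat (Suc m) * trace (mpow J m ** X))) / real (Suc m)) (at 0)"
    by (simp only: trace_power_def snd_conv has_real_derivative_iff_has_vector_derivative)
  moreover have "Re (c * (of_nat (Suc m) * trace (mpow J m ** X))) / real (Suc m) = pair (csc c (mpow J m)) X"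
    by (simp add: pair_def csc_mult_left trace_csc mult.left_commute[of c])
  ultimately show "((\<lambda>t. trace_power c (Suc m) (g, J + t *\<^sub>R X)) has_real_derivative
          pair (csc c (mpow J m)) X) (at 0)"
    by simp
qed

lemma has_power_gradient_trace_power: "has_power_gradient (trace_power c (Suc m)) c m"
  by (simp add: has_power_gradient_def nabla1_def nabla1'_def d2_trace_power trace_power_def mgrad_const)

lemma trace_mult_comm: "trace (A ** comm B C) = trace (comm A B ** (C::'n::finite cmat))"
proof -
  have "trace (A ** (C ** B)) = trace ((B ** A) ** C)"
    by (simp only: matrix_mul_assoc trace_mul_sym[of "A ** C"])
  then show ?thesis
    by (simp add: comm_def matrix_diff_ldistrib matrix_diff_rdistrib trace_sub matrix_mul_assoc)
qed

lemma trace_comm_mult_eq_0: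
  assumes "comm A C = 0"
  shows "trace (comm A B ** (C::'n::finite cmat)) = 0"
proof -
  have "trace (comm A B ** C) = - trace (comm B A ** C)"
    by (simp add: comm_def matrix_diff_rdistrib trace_sub)
  also have "\<dots> = 0"
    using assms by (simp flip: trace_mult_comm)
  finally show ?thesis .
qed

lemma comm_csc_mpow: "comm (csc c (mpow A a)) (csc d (mpow A b)) = 0"
  by (simp add: comm_def csc_mult_left csc_mult_right csc_csc mpow_mult_commute[of A a] mult.commute)

lemma comm_self_csc_mpow: "comm A (csc c (mpow A m)) = 0"
  using comm_csc_mpow[of 1 A 1 c m] by simp

lemma PB1_power_gradients:
  "has_power_gradient H c m \<Longrightarrow> has_power_gradient H' c' m' \<Longrightarrow> PB1 H H' p = 0"
  by (cases p) (simp add: has_power_gradient_def PB1_def comm_csc_mpow)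

lemma PB2_power_gradients:
  "has_power_gradient H c m \<Longrightarrow> has_power_gradient H' c' m' \<Longrightarrow> PB2 H H' p = 0"
  by (cases p) (simp add: has_power_gradient_def PB2_def nabla2_def nabla2'_def csc_mult_left csc_mult_right
      mpow_commute)

lemma PB2_power_gradient:
  assumes "has_power_gradient H c m"
  shows "PB2 F H (g, J) = pair (nabla1 F g J) (csc c (mpow J (Suc m)))"
proof -
  let ?Z = "csc c (mpow J (Suc m))"
  have nabla2_H: "nabla2 H g J = ?Z" "nabla2' H g J = ?Z"
    using assms by (simp_all add: has_power_gradient_def nabla2_def nabla2'_def csc_mult_left
        csc_mult_right mpow_Suc_right[symmetric])
  have "nabla2 F g J - nabla2' F g J = comm J (d2 F g J)"
    by (simp add: nabla2_def nabla2'_def comm_def)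
  moreover have "pair (comm J (d2 F g J)) ?Z = 0"
    by (simp only: pair_def trace_comm_mult_eq_0[OF comm_self_csc_mpow]) simp
  ultimately show ?thesis
    using assms nabla2_H by (simp add: PB2_def has_power_gradient_def)
qed

lemma PB1_power_gradient:
  assumes "has_power_gradient H c (Suc m)"
  shows "PB1 F H (g, J) = pair (nabla1 F g J) (csc c (mpow J (Suc m)))"
proof -
  have "pair J (comm (d2 F g J) (csc c (mpow J (Suc m)))) = 0"
    by (simp only: pair_def trace_mult_comm trace_comm_mult_eq_0[OF comm_self_csc_mpow]) simp
  then show ?thesis
    using assms by (simp add: PB1_def has_power_gradient_def)
qed

lemma PB2_eq_PB1_power_gradients:
  assumes "has_power_gradient H c m" and "has_power_gradient H' c (Suc m)"
  shows "PB2 F H p = PB1 F H' p"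
  using PB2_power_gradient[OF assms(1)] PB1_power_gradient[OF assms(2)] by (cases p) simp

section \<open>Hamiltonian flows along one-parameter subgroups\<close>

lemma smooth_on_differentiable: "smooth_on U F \<Longrightarrow> x \<in> U \<Longrightarrow> F differentiable (at x)"
  by (auto elim: smooth_on.cases)

lemma has_real_derivative_chain:
  assumes "(\<gamma> has_vector_derivative v) (at t)" and "(F has_derivative L) (at (\<gamma> t))"
  shows "((\<lambda>s. F (\<gamma> s)) has_real_derivative L v) (at t)"
proof -
  have "((\<lambda>s. F (\<gamma> s)) has_derivative (\<lambda>h. L (h *\<^sub>R v))) (at t)"
    using has_derivative_compose[OF assms(1)[unfolded has_vector_derivative_def] assms(2)] .
  moreover have "(\<lambda>h. L (h *\<^sub>R v)) = (*) (L v)"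
    using linear_scale[OF has_derivative_linear[OF assms(2)]] by (auto simp: mult.commute)
  ultimately show ?thesis by (simp add: has_field_derivative_def)
qed

lemma has_vector_derivative_mexp_orbit:
  fixes g :: "'n::finite cmat"
  shows "((\<lambda>s. (mexp (s *\<^sub>R C) ** g, J)) has_vector_derivative (C ** (mexp (t *\<^sub>R C) ** g), 0)) (at t)"
proof -
  have "bounded_linear (\<lambda>M::'n::finite cmat. M ** g)"
    by (simp add: linear_conv_bounded_linear[symmetric] linearI matrix_add_rdistrib
        scalar_matrix_assoc[symmetric])
  from has_vector_derivative_Pair[OF bounded_linear.has_vector_derivative[OF this has_vector_derivative_mexp]
      has_vector_derivative_const[of J]]
  show ?thesis by (simp add: matrix_mul_assoc)
qed

lemma pair_nabla1:
  assumes "(F has_derivative L) (at (g, J))"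
  shows "pair (nabla1 F g J) X = L (X ** g, 0)"
  unfolding nabla1_def
proof (rule pair_mgrad)
  have L: "linear L"
    using assms by (rule has_derivative_linear)
  show "linear (\<lambda>X. L (X ** g, 0))"
  proof (rule linearI)
    show "L ((X + Y) ** g, 0) = L (X ** g, 0) + L (Y ** g, 0)" for X Y
      using linear_add[OF L, of "(X ** g, 0)" "(Y ** g, 0)"] by (simp add: matrix_add_rdistrib)
    show "L ((r *\<^sub>R X) ** g, 0) = r *\<^sub>R L (X ** g, 0)" for r X
      using linear_scale[OF L, of r "(X ** g, 0)"] by (simp add: scalar_matrix_assoc[symmetric])
  qed
  show "((\<lambda>t. F (mexp (t *\<^sub>R X) ** g, J)) has_real_derivative L (X ** g, 0)) (at 0)" for X
    using has_real_derivative_chain[OF has_vector_derivative_mexp_orbit[of X g J 0]] assms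
    by (simp add: mexp_zero)
qed

lemma ham_flow_curve_mexp_orbit:
  fixes g0 J0 C :: "'n::finite cmat"
  assumes "invertible g0" and "\<And>F g. PB F H (g, J0) = pair (nabla1 F g J0) C"
  shows "ham_flow_curve PB H (g0, J0) (\<lambda>t. (mexp (t *\<^sub>R C) ** g0, J0))"
  unfolding ham_flow_curve_def
proof (intro conjI allI impI)
  show "(mexp (0 *\<^sub>R C) ** g0, J0) = (g0, J0)"
    by (simp add: mexp_zero)
  show orbit: "(mexp (t *\<^sub>R C) ** g0, J0) \<in> Mspace" for t
    by (simp add: Mspace_def invertible_mult invertible_mexp assms(1))
  fix F :: "'n cmat \<times> 'n cmat \<Rightarrow> real" and t :: real
  assume "smooth_on Mspace F"
  then obtain L where L: "(F has_derivative L) (at (mexp (t *\<^sub>R C) ** g0, J0))"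
    using smooth_on_differentiable[OF _ orbit] differentiable_def by blast
  show "((\<lambda>s. F (mexp (s *\<^sub>R C) ** g0, J0)) has_real_derivative PB F H (mexp (t *\<^sub>R C) ** g0, J0)) (at t)"
    using has_real_derivative_chain[OF has_vector_derivative_mexp_orbit L] pair_nabla1[OF L]
    by (simp add: assms(2))
qed

lemma ham_flow_curve_PB2_power_gradient:
  assumes "has_power_gradient H c m" and "invertible g0"
  shows "ham_flow_curve PB2 H (g0, J0) (\<lambda>t. (mexp (t *\<^sub>R csc c (mpow J0 (Suc m))) ** g0, J0))"
  using assms by (intro ham_flow_curve_mexp_orbit PB2_power_gradient)

lemma ham_flow_curve_PB1_power_gradient:
  assumes "has_power_gradient H c (Suc m)" and "invertible g0"
  shows "ham_flow_curve PB1 H (g0, J0) (\<lambda>t. (mexp (t *\<^sub>R csc c (mpow J0 (Suc m))) ** g0, J0))"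
  using assms by (intro ham_flow_curve_mexp_orbit PB1_power_gradient)

theorem proposition2p3:
  fixes dummy :: "'n::{finite,linorder}"
  shows
  "(\<forall>k l. k \<ge> 1 \<longrightarrow> l \<ge> 1 \<longrightarrow>
      (\<forall>p\<in>(Mspace :: ('n cmat \<times> 'n cmat) set).
         PB1 (Hk k) (Hk l) p = 0 \<and> PB1 (Hk k) (Htk l) p = 0 \<and> PB1 (Htk k) (Hk l) p = 0 \<and> PB1 (Htk k) (Htk l) p = 0 \<and>
         PB2 (Hk k) (Hk l) p = 0 \<and> PB2 (Hk k) (Htk l) p = 0 \<and> PB2 (Htk k) (Hk l) p = 0 \<and> PB2 (Htk k) (Htk l) p = 0))
   \<and> (\<forall>k. k \<ge> 1 \<longrightarrow> (\<forall>F. smooth_on (Mspace :: ('n cmat \<times> 'n cmat) set) F \<longrightarrow>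
        (\<forall>p\<in>Mspace. PB2 F (Hk k) p = PB1 F (Hk (k+1)) p \<and>
                     PB2 F (Htk k) p = PB1 F (Htk (k+1)) p)))
   \<and> (\<forall>k. k \<ge> 1 \<longrightarrow> (\<forall>g0 J0 :: 'n cmat. invertible g0 \<longrightarrow>
        ham_flow_curve PB2 (Hk k) (g0, J0) (\<lambda>t. (mexp (t *\<^sub>R mpow J0 k) ** g0, J0)) \<and>
        ham_flow_curve PB1 (Hk (k+1)) (g0, J0) (\<lambda>t. (mexp (t *\<^sub>R mpow J0 k) ** g0, J0)) \<and>
        ham_flow_curve PB2 (Htk k) (g0, J0)
           (\<lambda>t. (mexp (csc (- \<i> * complex_of_real t) (mpow J0 k)) ** g0, J0)) \<and>
        ham_flow_curve PB1 (Htk (k+1)) (g0, J0)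
           (\<lambda>t. (mexp (csc (- \<i> * complex_of_real t) (mpow J0 k)) ** g0, J0))))"
proof (intro conjI allI impI ballI)
  fix k l :: nat and p :: "'n cmat \<times> 'n cmat"
  assume "k \<ge> 1" "l \<ge> 1"
  then obtain m m' where "k = Suc m" "l = Suc m'"
    by (metis Suc_le_D One_nat_def)
  then have "has_power_gradient (Hk k) 1 m" "has_power_gradient (Htk k) (- \<i>) m"
    "has_power_gradient (Hk l) 1 m'" "has_power_gradient (Htk l) (- \<i>) m'"
    by (simp_all add: Hk_eq_trace_power Htk_eq_trace_power has_power_gradient_trace_power)
  then show "PB1 (Hk k) (Hk l) p = 0" "PB1 (Hk k) (Htk l) p = 0" "PB1 (Htk k) (Hk l) p = 0"
    "PB1 (Htk k) (Htk l) p = 0" "PB2 (Hk k) (Hk l) p = 0" "PB2 (Hk k) (Htk l) p = 0"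
    "PB2 (Htk k) (Hk l) p = 0" "PB2 (Htk k) (Htk l) p = 0"
    by (auto intro: PB1_power_gradients PB2_power_gradients)
next
  fix k :: nat and F and p :: "'n cmat \<times> 'n cmat"
  assume "k \<ge> 1"
  then obtain m where "k = Suc m"
    by (metis Suc_le_D One_nat_def)
  then show "PB2 F (Hk k) p = PB1 F (Hk (k + 1)) p" "PB2 F (Htk k) p = PB1 F (Htk (k + 1)) p"
    using PB2_eq_PB1_power_gradients[OF has_power_gradient_trace_power has_power_gradient_trace_power]
    by (simp_all add: Hk_eq_trace_power Htk_eq_trace_power)
next
  fix k :: nat and g0 J0 :: "'n cmat"
  assume "k \<ge> 1" and g0: "invertible g0"
  then obtain m where k: "k = Suc m"
    by (metis Suc_le_D One_nat_def)
  have grad: "has_power_gradient (Hk k) 1 m" "has_power_gradient (Hk (k + 1)) 1 (Suc m)"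
    "has_power_gradient (Htk k) (- \<i>) m" "has_power_gradient (Htk (k + 1)) (- \<i>) (Suc m)"
    by (simp_all add: k Hk_eq_trace_power Htk_eq_trace_power has_power_gradient_trace_power)
  show "ham_flow_curve PB2 (Hk k) (g0, J0) (\<lambda>t. (mexp (t *\<^sub>R mpow J0 k) ** g0, J0))"
    using ham_flow_curve_PB2_power_gradient[OF grad(1) g0] by (simp add: k)
  show "ham_flow_curve PB1 (Hk (k + 1)) (g0, J0) (\<lambda>t. (mexp (t *\<^sub>R mpow J0 k) ** g0, J0))"
    using ham_flow_curve_PB1_power_gradient[OF grad(2) g0] by (simp add: k)
  show "ham_flow_curve PB2 (Htk k) (g0, J0) (\<lambda>t. (mexp (csc (- \<i> * complex_of_real t) (mpow J0 k)) ** g0, J0))"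
    using ham_flow_curve_PB2_power_gradient[OF grad(3) g0] unfolding csc_of_real by (simp add: k)
  show "ham_flow_curve PB1 (Htk (k + 1)) (g0, J0) (\<lambda>t. (mexp (csc (- \<i> * complex_of_real t) (mpow J0 k)) ** g0, J0))"
    using ham_flow_curve_PB1_power_gradient[OF grad(4) g0] unfolding csc_of_real by (simp add: k)
qed

end
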